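(* Let $\big(m_{i,j}^{s,t}\big)_{i,j,s,t\ge 0}$ and $\big(\phi_i^{s,t}\big)_{i,s,t\ge0}$ be real numbers with $m_{i,j}^{s,t}=m_{j,i}^{s,t}$ for all $i,j,s,t$, satisfying $$m_{i,j}^{s+1,t}=m_{i+1,j+1}^{s,t},\qquad m_{i,j}^{s,t+1}=m_{i,j}^{s,t}-\phi_i^{s,t}\phi_j^{s,t},\qquad \phi_i^{s+1,t}=\phi_{i+1}^{s,t}$$ for all $i,j,s,t\ge 0$. Put $\tau_n^{s,t}=\det\big(m_{i,j}^{s,t}\big)_{i,j=0}^{n-1}$ for $n\ge1$ and $\tau_0^{s,t}=1$. Then for all $n\ge 1$ and $s,t\ge 0$, $$ \begin{aligned} &4\left(\tau_{n}^{s+1,t}\tau_n^{s,t}-\tau_{n+1}^{s,t}\tau_{n-1}^{s+1,t}\right)\left(\tau_n^{s+1,t+1}\tau_n^{s,t+1}-\tau_{n+1}^{s,t+1}\tau_{n-1}^{s+1,t+1}\right)\\ &\qquad=\left(\tau_n^{s+1,t}\tau_n^{s,t+1}+\tau_n^{s+1,t+1}\tau_n^{s,t}-\tau_{n+1}^{s,t+1}\tau_{n-1}^{s+1,t}-\tau_{n+1}^{s,t}\tau_{n-1}^{s+1,t+1}\right)^2. \end{aligned} $$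
   Context: The displayed quartic equation is the discrete CKP equation. The empty determinant $\tau_0^{s,t}$ equals $1$. *)

theory Defs
  imports "Jordan_Normal_Form.Determinant"
begin

definition tau :: "(nat \<Rightarrow> nat \<Rightarrow> nat \<Rightarrow> nat \<Rightarrow> real) \<Rightarrow> nat \<Rightarrow> nat \<Rightarrow> nat \<Rightarrow> real" where
  "tau m n s t = det (mat n n (\<lambda>(i, j). m i j s t))"

lemma tau_0: "tau m 0 s t = 1"
  unfolding tau_def by (simp add: det_def)

end

(* Border the kernel m^{s,t} on the indices 0..n by an extra index n+1 carrying phi^{s,t} and
   the corner entry 1. The Schur complement of that corner turns m^{s,t} into m^{s,t+1}, and the
   shift relation turns the index window 1..k into the data at time s+1. So, with K = {1..n-1},
   the eight tau-functions are the principal minors of one symmetric matrix on the index sets K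
   enlarged by a subset of {0, n, n+1}. For principal minors of a symmetric matrix the quartic is
   Cayley's hyperdeterminant relation: a Schur complement with respect to K reduces it to an
   identity for symmetric 3x3 matrices, and a singular K-block is handled by perturbing the
   diagonal and passing to the limit. *)
theory Submission
  imports Defs "Jordan_Normal_Form.Char_Poly"
begin

definition kernel_mat :: "(nat \<Rightarrow> nat \<Rightarrow> 'a) \<Rightarrow> nat list \<Rightarrow> 'a mat" where
  "kernel_mat g xs = mat (length xs) (length xs) (\<lambda>(i, j). g (xs ! i) (xs ! j))"

definition principal_minor :: "(nat \<Rightarrow> nat \<Rightarrow> 'a :: comm_ring_1) \<Rightarrow> nat list \<Rightarrow> 'a" where
  "principal_minor g xs = det (kernel_mat g xs)"

lemma kernel_mat_carrier [simp]: "kernel_mat g xs \<in> carrier_mat (length xs) (length xs)"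
  by (simp add: kernel_mat_def)

lemma principal_minor_cong:
  assumes "\<And>i j. i \<in> set xs \<Longrightarrow> j \<in> set xs \<Longrightarrow> g i j = h i j"
  shows "principal_minor g xs = principal_minor h xs"
  unfolding principal_minor_def kernel_mat_def
  by (rule arg_cong[of _ _ det], rule eq_matI) (auto intro!: assms)

lemma principal_minor_Nil [simp]: "principal_minor g [] = 1"
  by (simp add: principal_minor_def kernel_mat_def det_def)

lemma principal_minor_permute_list:
  assumes p: "p permutes {..<length xs}"
  shows "principal_minor g (permute_list p xs) = principal_minor g xs"
proof -
  let ?k = "length xs"
  define A where "A = kernel_mat g xs"
  have A: "A \<in> carrier_mat ?k ?k" by (simp add: A_def)
  have p': "p permutes {0..<?k}" using p by (simp add: lessThan_atLeast0)
  define B where "B = mat ?k ?k (\<lambda>(i, j). A $$ (p i, j))"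
  have B: "B \<in> carrier_mat ?k ?k" by (simp add: B_def)
  define C where "C = mat ?k ?k (\<lambda>(i, j). transpose_mat B $$ (p i, j))"
  have C: "C \<in> carrier_mat ?k ?k" by (simp add: C_def)
  have "transpose_mat C = kernel_mat g (permute_list p xs)"
    unfolding C_def B_def A_def kernel_mat_def
    by (rule eq_matI) (use p' in \<open>auto simp: permute_list_def permutes_in_image\<close>)
  then have "principal_minor g (permute_list p xs) = det C"
    using det_transpose[OF C] by (simp add: principal_minor_def)
  also have "\<dots> = signof p * det (transpose_mat B)"
    unfolding C_def by (rule det_permute_rows[OF _ p']) (use B in auto)
  also have "\<dots> = signof p * (signof p * det A)"
    using det_permute_rows[OF A p'] det_transpose[OF B] by (simp add: B_def)
  also have "\<dots> = det A"
    by (cases p rule: sign_cases) simp_all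
  finally show ?thesis by (simp add: A_def principal_minor_def)
qed

lemma principal_minor_mset_eq:
  assumes "mset xs = mset ys"
  shows "principal_minor g xs = principal_minor g ys"
proof -
  from assms obtain p where "p permutes {..<length ys}" "permute_list p ys = xs"
    by (rule mset_eq_permutation)
  then show ?thesis by (metis principal_minor_permute_list)
qed

lemma det_mat_2:
  assumes A: "A \<in> carrier_mat 2 2"
  shows "det A = A $$ (0,0) * A $$ (1,1) - A $$ (0,1) * A $$ (1,0)"
proof -
  have "det A = A $$ (0,0) * cofactor A 0 0 + A $$ (0,1) * cofactor A 0 1"
    using laplace_expansion_row[OF A, of 0] by (simp add: numeral_2_eq_2)
  moreover have "cofactor A 0 0 = A $$ (1,1)" "cofactor A 0 1 = - A $$ (1,0)"
    unfolding cofactor_def using A by (subst det_single; auto simp: mat_delete_def)+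
  ultimately show ?thesis by simp
qed

lemma det_mat_3:
  assumes A: "A \<in> carrier_mat 3 3"
  shows "det A = A $$ (0,0) * (A $$ (1,1) * A $$ (2,2) - A $$ (1,2) * A $$ (2,1))
     - A $$ (0,1) * (A $$ (1,0) * A $$ (2,2) - A $$ (1,2) * A $$ (2,0))
     + A $$ (0,2) * (A $$ (1,0) * A $$ (2,1) - A $$ (1,1) * A $$ (2,0))"
proof -
  have laplace: "det A = A $$ (0,0) * cofactor A 0 0 + A $$ (0,1) * cofactor A 0 1
      + A $$ (0,2) * cofactor A 0 2"
    using laplace_expansion_row[OF A, of 0] by (simp add: numeral_3_eq_3 numeral_2_eq_2)
  have cofactors: "cofactor A 0 0 = A $$ (1,1) * A $$ (2,2) - A $$ (1,2) * A $$ (2,1)"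
    "cofactor A 0 1 = - (A $$ (1,0) * A $$ (2,2) - A $$ (1,2) * A $$ (2,0))"
    "cofactor A 0 2 = A $$ (1,0) * A $$ (2,1) - A $$ (1,1) * A $$ (2,0)"
    unfolding cofactor_def using A
    by (subst det_mat_2; auto simp: mat_delete_def numeral_2_eq_2)+
  show ?thesis unfolding laplace cofactors by (simp add: algebra_simps)
qed

lemma principal_minor_1: "principal_minor h [p] = h p p"
  unfolding principal_minor_def kernel_mat_def by (subst det_single) auto

lemma principal_minor_2: "principal_minor h [p, q] = h p p * h q q - h p q * h q p"
  unfolding principal_minor_def kernel_mat_def by (subst det_mat_2) auto

lemma principal_minor_3:
  "principal_minor h [p, q, r] = h p p * (h q q * h r r - h q r * h r q)
     - h p q * (h q p * h r r - h q r * h r p) + h p r * (h q p * h r q - h q q * h r p)"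
  unfolding principal_minor_def kernel_mat_def by (subst det_mat_3) (auto simp: numeral_3_eq_3)

definition schur_complement :: "(nat \<Rightarrow> nat \<Rightarrow> 'a :: field) \<Rightarrow> nat list \<Rightarrow> nat \<Rightarrow> nat \<Rightarrow> 'a" where
  "schur_complement g ks i j = g i j - (\<Sum>a<length ks. \<Sum>b<length ks.
     g i (ks ! a) * (adj_mat (kernel_mat g ks) $$ (a, b) / principal_minor g ks) * g (ks ! b) j)"

lemma principal_minor_append_schur:
  fixes g :: "nat \<Rightarrow> nat \<Rightarrow> 'a :: field"
  assumes nz: "principal_minor g ks \<noteq> 0"
  shows "principal_minor g (ks @ ss) = principal_minor g ks * principal_minor (schur_complement g ks) ss"
proof -
  define k where "k = length ks"
  define l where "l = length ss"
  define P where "P = kernel_mat g ks"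
  define Q where "Q = (1 / det P) \<cdot>\<^sub>m adj_mat P"
  define B where "B = mat k l (\<lambda>(a, j). g (ks ! a) (ss ! j))"
  define C where "C = mat l k (\<lambda>(i, b). g (ss ! i) (ks ! b))"
  define D where "D = kernel_mat g ss"
  define S where "S = D - C * Q * B"
  have P: "P \<in> carrier_mat k k" by (simp add: P_def k_def)
  have Q: "Q \<in> carrier_mat k k" unfolding Q_def using adj_mat[OF P] by auto
  have B: "B \<in> carrier_mat k l" and C: "C \<in> carrier_mat l k" by (simp_all add: B_def C_def)
  have D: "D \<in> carrier_mat l l" by (simp add: D_def l_def)
  have S: "S \<in> carrier_mat l l" unfolding S_def using C Q B D by auto
  have CQ: "C * Q \<in> carrier_mat l k" using C Q by auto
  have QP: "Q * P = 1\<^sub>m k"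
    unfolding Q_def using adj_mat[OF P] nz
    by (subst mult_smult_assoc_mat[OF adj_mat(1)[OF P] P]) (auto simp: P_def principal_minor_def)
  define L where "L = four_block_mat (1\<^sub>m k) (0\<^sub>m k l) (C * Q) (1\<^sub>m l)"
  define U where "U = four_block_mat P B (0\<^sub>m l k) S"
  have "L * U = four_block_mat (1\<^sub>m k * P + 0\<^sub>m k l * 0\<^sub>m l k) (1\<^sub>m k * B + 0\<^sub>m k l * S)
      (C * Q * P + 1\<^sub>m l * 0\<^sub>m l k) (C * Q * B + 1\<^sub>m l * S)"
    unfolding L_def U_def by (rule mult_four_block_mat) (use P B S CQ in auto)
  also have "\<dots> = four_block_mat P B C D"
  proof -
    have "C * Q * B + S = D" unfolding S_def using C Q B D by (intro eq_matI) auto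
    then show ?thesis using P B C S QP by (simp add: assoc_mult_mat[OF C Q P])
  qed
  also have "\<dots> = kernel_mat g (ks @ ss)"
    unfolding P_def B_def C_def D_def kernel_mat_def k_def l_def
    by (rule eq_matI) (auto simp: four_block_mat_def nth_append Let_def)
  finally have LU: "kernel_mat g (ks @ ss) = L * U" ..
  have L: "L \<in> carrier_mat (k + l) (k + l)" and U: "U \<in> carrier_mat (k + l) (k + l)"
    unfolding L_def U_def using CQ P B S by auto
  have "det L = 1" unfolding L_def
    by (subst det_four_block_mat_upper_right_zero[of _ k _ l]) (use CQ in auto)
  moreover have "det U = det P * det S" unfolding U_def
    by (rule det_four_block_mat_lower_left_zero[OF P B _ S]) simp
  moreover have "S = kernel_mat (schur_complement g ks) ss"
  proof (rule eq_matI)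
    fix i j assume ij: "i < dim_row (kernel_mat (schur_complement g ks) ss)"
      "j < dim_col (kernel_mat (schur_complement g ks) ss)"
    then have "i < l" "j < l" by (simp_all add: l_def kernel_mat_def)
    then have "(C * Q * B) $$ (i, j) = (\<Sum>a<k. C $$ (i, a) * (\<Sum>b<k. Q $$ (a, b) * B $$ (b, j)))"
      using C Q B by (simp add: scalar_prod_def atLeast0LessThan)
    also have "\<dots> = (\<Sum>a<k. \<Sum>b<k. g (ss ! i) (ks ! a) * (adj_mat P $$ (a, b) / det P) * g (ks ! b) (ss ! j))"
      using \<open>i < l\<close> \<open>j < l\<close> adj_mat(1)[OF P]
      by (simp add: sum_distrib_left C_def B_def Q_def mult.assoc)
    finally show "S $$ (i, j) = kernel_mat (schur_complement g ks) ss $$ (i, j)"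
      using \<open>i < l\<close> \<open>j < l\<close> C Q B D
      by (simp add: S_def D_def kernel_mat_def schur_complement_def l_def k_def P_def principal_minor_def)
  qed (use S in \<open>auto simp: l_def kernel_mat_def\<close>)
  ultimately show ?thesis
    unfolding principal_minor_def LU det_mult[OF L U] by (simp add: P_def)
qed

lemma adj_mat_symmetric:
  assumes A: "A \<in> carrier_mat n n"
    and sym: "\<And>i j. i < n \<Longrightarrow> j < n \<Longrightarrow> A $$ (i, j) = A $$ (j, i)"
    and ij: "i < n" "j < n"
  shows "adj_mat A $$ (i, j) = adj_mat A $$ (j, i)"
proof -
  have "mat_delete A i j = transpose_mat (mat_delete A j i)"
    by (rule eq_matI) (use A sym in \<open>auto simp: mat_delete_def\<close>)
  then have "det (mat_delete A i j) = det (mat_delete A j i)"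
    using det_transpose[OF mat_delete_carrier[OF A]] by simp
  then show ?thesis using A ij by (simp add: adj_mat_def cofactor_def add.commute)
qed

lemma schur_complement_symmetric:
  assumes sym: "\<And>i j. g i j = g j i"
  shows "schur_complement g ks i j = schur_complement g ks j i"
proof -
  let ?k = "length ks" and ?P = "kernel_mat g ks"
  have adj: "adj_mat ?P $$ (a, b) = adj_mat ?P $$ (b, a)" if "a < ?k" "b < ?k" for a b
    by (rule adj_mat_symmetric[OF kernel_mat_carrier _ that]) (simp add: kernel_mat_def sym)
  have "(\<Sum>a<?k. \<Sum>b<?k. g i (ks ! a) * (adj_mat ?P $$ (a, b) / principal_minor g ks) * g (ks ! b) j)
      = (\<Sum>a<?k. \<Sum>b<?k. g j (ks ! b) * (adj_mat ?P $$ (b, a) / principal_minor g ks) * g (ks ! a) i)"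
    by (intro sum.cong refl) (simp add: adj sym mult_ac)
  also have "\<dots> = (\<Sum>a<?k. \<Sum>b<?k. g j (ks ! a) * (adj_mat ?P $$ (a, b) / principal_minor g ks) * g (ks ! b) i)"
    by (rule sum.swap)
  finally show ?thesis by (simp add: schur_complement_def sym[of i j])
qed

lemma schur_complement_single:
  "schur_complement g [N] i j = g i j - g i N * g N j / g N N"
  by (simp add: schur_complement_def principal_minor_1 adj_mat_def cofactor_def kernel_mat_def
      mat_delete_def det_def)

(* Minus Cayley's 2x2x2 hyperdeterminant of the cube of values mu S, S a subset of {p, q, r}. *)
definition ckp_quartic :: "(nat list \<Rightarrow> 'a :: comm_ring_1) \<Rightarrow> nat \<Rightarrow> nat \<Rightarrow> nat \<Rightarrow> 'a" where
  "ckp_quartic \<mu> p q r =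
     4 * (\<mu> [q] * \<mu> [p] - \<mu> [p, q] * \<mu> []) * (\<mu> [q, r] * \<mu> [p, r] - \<mu> [p, q, r] * \<mu> [r])
     - (\<mu> [q] * \<mu> [p, r] + \<mu> [q, r] * \<mu> [p] - \<mu> [p, q, r] * \<mu> [] - \<mu> [p, q] * \<mu> [r])\<^sup>2"

lemma ckp_quartic_scale: "ckp_quartic (\<lambda>xs. d * \<mu> xs) p q r = d ^ 4 * ckp_quartic \<mu> p q r"
  by (simp add: ckp_quartic_def power2_eq_square eval_nat_numeral algebra_simps)

lemma ckp_quartic_principal_minor:
  assumes sym: "\<And>i j. h i j = h j i"
  shows "ckp_quartic (principal_minor h) p q r = 0"
  unfolding ckp_quartic_def principal_minor_Nil principal_minor_1 principal_minor_2 principal_minor_3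
    sym[of q p] sym[of r p] sym[of r q]
  by (simp add: power2_eq_square algebra_simps)

lemma ckp_quartic_principal_minor_append_nonsingular:
  fixes g :: "nat \<Rightarrow> nat \<Rightarrow> 'a :: field"
  assumes sym: "\<And>i j. g i j = g j i" and nz: "principal_minor g K \<noteq> 0"
  shows "ckp_quartic (\<lambda>xs. principal_minor g (K @ xs)) p q r = 0"
  using ckp_quartic_scale[of "principal_minor g K" "principal_minor (schur_complement g K)"]
    ckp_quartic_principal_minor[OF schur_complement_symmetric[OF sym]]
  by (simp add: principal_minor_append_schur[OF nz])

lemma isCont_principal_minor:
  fixes G :: "'a :: t2_space \<Rightarrow> nat \<Rightarrow> nat \<Rightarrow> 'b :: real_normed_field"
  assumes "\<And>i j. isCont (\<lambda>e. G e i j) x"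
  shows "isCont (\<lambda>e. principal_minor (G e) xs) x"
proof -
  let ?n = "length xs"
  have "(\<lambda>e. principal_minor (G e) xs) = (\<lambda>e. \<Sum>p \<in> {p. p permutes {0..<?n}}. signof p *
     (\<Prod>i = 0..<?n. G e (xs ! i) (xs ! p i)))"
    unfolding principal_minor_def
    by (subst det_def'[of _ ?n]) (auto intro!: sum.cong prod.cong simp: kernel_mat_def permutes_in_image)
  then show ?thesis by (simp only:) (intro continuous_intros assms)
qed

definition kernel_add_diag :: "(nat \<Rightarrow> nat \<Rightarrow> 'a :: comm_ring_1) \<Rightarrow> 'a \<Rightarrow> nat \<Rightarrow> nat \<Rightarrow> 'a" where
  "kernel_add_diag g e i j = g i j + (if i = j then e else 0)"

lemma finite_principal_minor_add_diag_eq_0: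
  fixes g :: "nat \<Rightarrow> nat \<Rightarrow> 'a :: idom"
  assumes "distinct K"
  shows "finite {e. principal_minor (kernel_add_diag g e) K = 0}"
proof -
  let ?k = "length K"
  have M: "- kernel_mat g K \<in> carrier_mat ?k ?k" by simp
  have "poly (char_poly (- kernel_mat g K)) e = principal_minor (kernel_add_diag g e) K" for e
    unfolding char_poly_def principal_minor_def
    by (rule poly_det_cong[of _ ?k]) (use assms in \<open>auto simp: kernel_mat_def char_poly_matrix_def
      kernel_add_diag_def nth_eq_iff_index_eq\<close>)
  moreover have "char_poly (- kernel_mat g K) \<noteq> 0" using degree_monic_char_poly[OF M] by auto
  ultimately show ?thesis using poly_roots_finite[of "char_poly (- kernel_mat g K)"] by simp
qed

lemma isCont_const_off_finite:
  fixes f :: "'a :: {perfect_space, t2_space} \<Rightarrow> 'b :: t2_space"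
  assumes cont: "isCont f x" and Z: "finite Z" and off: "\<And>e. e \<notin> Z \<Longrightarrow> f e = c"
  shows "f x = c"
proof -
  have "eventually (\<lambda>e. \<forall>z\<in>Z. e \<noteq> z) (at x)"
    by (rule eventually_ball_finite[OF Z]) (simp add: eventually_neq_at_within)
  then have "eventually (\<lambda>e. f e = c) (at x)"
    by (rule eventually_mono) (use off in blast)
  then have "(f \<longlongrightarrow> c) (at x)" by (rule tendsto_eventually)
  with cont show ?thesis by (auto simp: isCont_def intro: tendsto_unique[OF at_neq_bot])
qed

lemma ckp_quartic_principal_minor_append:
  fixes g :: "nat \<Rightarrow> nat \<Rightarrow> real"
  assumes sym: "\<And>i j. g i j = g j i" and K: "distinct K"
  shows "ckp_quartic (\<lambda>xs. principal_minor g (K @ xs)) p q r = 0"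
proof -
  define F where "F e = ckp_quartic (\<lambda>xs. principal_minor (kernel_add_diag g e) (K @ xs)) p q r" for e
  have "isCont (\<lambda>e. kernel_add_diag g e i j) 0" for i j
    by (cases "i = j") (simp_all add: kernel_add_diag_def)
  then have "isCont F 0"
    unfolding F_def ckp_quartic_def by (intro continuous_intros isCont_principal_minor)
  moreover have "F e = 0" if "e \<notin> {e. principal_minor (kernel_add_diag g e) K = 0}" for e
    unfolding F_def using that
    by (intro ckp_quartic_principal_minor_append_nonsingular) (auto simp: kernel_add_diag_def sym)
  ultimately have "F 0 = 0"
    by (rule isCont_const_off_finite[OF _ finite_principal_minor_add_diag_eq_0[OF K]])
  moreover have "kernel_add_diag g 0 = g" by (simp add: kernel_add_diag_def fun_eq_iff)
  ultimately show ?thesis by (simp add: F_def)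
qed

definition bordered_kernel :: "(nat \<Rightarrow> nat \<Rightarrow> 'a :: one) \<Rightarrow> (nat \<Rightarrow> 'a) \<Rightarrow> nat \<Rightarrow> nat \<Rightarrow> nat \<Rightarrow> 'a" where
  "bordered_kernel g v N i j =
     (if i = N then (if j = N then 1 else v j) else if j = N then v i else g i j)"

lemma principal_minor_bordered_kernel:
  assumes "N \<notin> set xs"
  shows "principal_minor (bordered_kernel g v N) xs = principal_minor g xs"
  using assms by (intro principal_minor_cong) (auto simp: bordered_kernel_def)

lemma principal_minor_bordered_kernel_Cons:
  fixes g :: "nat \<Rightarrow> nat \<Rightarrow> 'a :: field"
  assumes "N \<notin> set xs"
  shows "principal_minor (bordered_kernel g v N) (N # xs) = principal_minor (\<lambda>i j. g i j - v i * v j) xs"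
proof -
  have "principal_minor (bordered_kernel g v N) [N] = 1"
    by (simp add: principal_minor_1 bordered_kernel_def)
  then have "principal_minor (bordered_kernel g v N) ([N] @ xs)
      = principal_minor (schur_complement (bordered_kernel g v N) [N]) xs"
    using principal_minor_append_schur[of "bordered_kernel g v N" "[N]" xs] by simp
  also have "\<dots> = principal_minor (\<lambda>i j. g i j - v i * v j) xs"
    using assms by (intro principal_minor_cong) (auto simp: schur_complement_single bordered_kernel_def)
  finally show ?thesis by simp
qed

lemma tau_eq_principal_minor: "tau m k s t = principal_minor (\<lambda>i j. m i j s t) [0..<k]"
  unfolding tau_def principal_minor_def kernel_mat_def by (intro arg_cong[of _ _ det] eq_matI) auto

lemma tau_Suc_eq_principal_minor:
  assumes "\<And>i j. m i j (Suc s) t = m (Suc i) (Suc j) s t"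
  shows "tau m k (Suc s) t = principal_minor (\<lambda>i j. m i j s t) [1..<Suc k]"
  unfolding tau_def principal_minor_def kernel_mat_def
  by (intro arg_cong[of _ _ det] eq_matI) (auto simp: assms simp del: upt_Suc)

lemma tau_eq_bordered_principal_minor:
  fixes m :: "nat \<Rightarrow> nat \<Rightarrow> nat \<Rightarrow> nat \<Rightarrow> real" and phi :: "nat \<Rightarrow> nat \<Rightarrow> nat \<Rightarrow> real"
    and s t n k :: nat
  assumes shift_m: "\<And>i j s t. m i j (Suc s) t = m (Suc i) (Suc j) s t"
    and step_m: "\<And>i j s t. m i j s (Suc t) = m i j s t - phi i s t * phi j s t"
  defines "G \<equiv> bordered_kernel (\<lambda>i j. m i j s t) (\<lambda>i. phi i s t) (Suc n)"
  shows "k \<le> Suc n \<Longrightarrow> tau m k s t = principal_minor G [0..<k]"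
    and "k \<le> n \<Longrightarrow> tau m k (Suc s) t = principal_minor G [1..<Suc k]"
    and "k \<le> Suc n \<Longrightarrow> tau m k s (Suc t) = principal_minor G (Suc n # [0..<k])"
    and "k \<le> n \<Longrightarrow> tau m k (Suc s) (Suc t) = principal_minor G (Suc n # [1..<Suc k])"
proof -
  note tau_Suc = tau_Suc_eq_principal_minor[of m, OF shift_m]
  show "k \<le> Suc n \<Longrightarrow> tau m k s t = principal_minor G [0..<k]"
    by (simp add: tau_eq_principal_minor principal_minor_bordered_kernel G_def)
  show "k \<le> n \<Longrightarrow> tau m k (Suc s) t = principal_minor G [1..<Suc k]"
    by (simp add: tau_Suc principal_minor_bordered_kernel G_def del: upt_Suc)
  show "k \<le> Suc n \<Longrightarrow> tau m k s (Suc t) = principal_minor G (Suc n # [0..<k])"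
    by (simp add: tau_eq_principal_minor step_m principal_minor_bordered_kernel_Cons G_def)
  show "k \<le> n \<Longrightarrow> tau m k (Suc s) (Suc t) = principal_minor G (Suc n # [1..<Suc k])"
    by (simp add: tau_Suc step_m principal_minor_bordered_kernel_Cons G_def del: upt_Suc)
qed

theorem corollary3p5:
  fixes m :: "nat \<Rightarrow> nat \<Rightarrow> nat \<Rightarrow> nat \<Rightarrow> real"
    and phi :: "nat \<Rightarrow> nat \<Rightarrow> nat \<Rightarrow> real"
  assumes sym: "\<And>i j s t. m i j s t = m j i s t"
    and shift_m: "\<And>i j s t. m i j (Suc s) t = m (Suc i) (Suc j) s t"
    and step_m: "\<And>i j s t. m i j s (Suc t) = m i j s t - phi i s t * phi j s t"
    and shift_phi: "\<And>i s t. phi i (Suc s) t = phi (Suc i) s t"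
    and n: "n \<ge> 1"
  shows "4 * (tau m n (s+1) t * tau m n s t - tau m (n+1) s t * tau m (n-1) (s+1) t)
           * (tau m n (s+1) (t+1) * tau m n s (t+1) - tau m (n+1) s (t+1) * tau m (n-1) (s+1) (t+1))
         = (tau m n (s+1) t * tau m n s (t+1) + tau m n (s+1) (t+1) * tau m n s t
            - tau m (n+1) s (t+1) * tau m (n-1) (s+1) t
            - tau m (n+1) s t * tau m (n-1) (s+1) (t+1))^2"
proof -
  define G where "G = bordered_kernel (\<lambda>i j. m i j s t) (\<lambda>i. phi i s t) (Suc n)"
  define K where "K = [1..<n]"
  define \<mu> where "\<mu> xs = principal_minor G (K @ xs)" for xs
  have ckp: "ckp_quartic \<mu> 0 n (Suc n) = 0"
    unfolding \<mu>_def G_def K_def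
    by (rule ckp_quartic_principal_minor_append) (auto simp: bordered_kernel_def sym)
  have \<mu>: "principal_minor G xs = \<mu> ys" if "mset xs = mset (K @ ys)" for xs ys
    unfolding \<mu>_def using that by (rule principal_minor_mset_eq)
  have K: "[0..<n] = 0 # K" "[Suc 0..<n] = K"
    using n by (simp_all add: K_def upt_conv_Cons)
  note \<tau> = tau_eq_bordered_principal_minor[where m = m and phi = phi and s = s and t = t and n = n,
    OF shift_m step_m, folded G_def]
  have taus: "tau m n s t = \<mu> [0]" "tau m n (s+1) t = \<mu> [n]" "tau m (n+1) s t = \<mu> [0, n]"
    "tau m (n-1) (s+1) t = \<mu> []" "tau m n s (t+1) = \<mu> [0, Suc n]" "tau m n (s+1) (t+1) = \<mu> [n, Suc n]"
    "tau m (n+1) s (t+1) = \<mu> [0, n, Suc n]" "tau m (n-1) (s+1) (t+1) = \<mu> [Suc n]"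
    using n by (auto simp: \<tau> K intro!: \<mu>)
  show ?thesis using ckp unfolding ckp_quartic_def right_minus_eq taus .
qed

end
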